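(* Assume $\lim_{\epsilon\to0}\frac{h_{ex}}{|\ln\epsilon|}=h_0\in[0,\infty)$. Let $(v_0,\vec A_0)\in V\times K_0$ be a minimizer of $\mathcal G_{h_0}$ and define $$\vec A^\epsilon(x)=|\ln\epsilon|\vec A_0(x)+(h_{ex}-h_0|\ln\epsilon|)\vec a(x).$$ Then $$\hat A^{\epsilon,s}:=\sum_{n=0}^{N-1}\frac{\hat A^\epsilon_n}{|\ln\epsilon|}\chi_n\to\hat A_0\quad\text{in }L^2(D;\mathbb R^2)$$ as $(\epsilon,s)\to(0,0)$, where $\hat A^\epsilon_n(\hat x)=(A^{\epsilon,1}(\hat x,ns),A^{\epsilon,2}(\hat x,ns))$ and $\hat A_0=(A_0^1,A_0^2)$.
   Context: Let $\Omega\subset\mathbb R^2$ be a bounded simply connected smooth domain, $L>0$, $D=\Omega\times(0,L)$, $s=L/N$ with $N$ a positive integer; $h_{ex}=h_{ex}(\epsilon)>0$. Points are $x=(\hat x,x_3)$; for $\vec A=(A^1,A^2,A^3)$, $\hat A=(A^1,A^2)$. $\vec a(x)=\frac12(-x_2,x_1,0)$. $\check H^1(\mathbb R^3;\mathbb R^3)$ is the completion of $C_c^\infty(\mathbb R^3;\mathbb R^3)$ under $(\int|\nabla\vec C|^2)^{1/2}$. $E_0:=\{\vec C\in H^1_{loc}(\mathbb R^3;\mathbb R^3):\nabla\times\vec C-h_0\vec e_3\in L^2\}$, $K_0:=\{\vec C\in E_0:\nabla\cdot\vec C=0,\ \vec C-h_0\vec a\in\check H^1\cap L^6(\mathbb R^3;\mathbb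 R^3)\}$. $\operatorname{curl}v=\partial_1v^2-\partial_2v^1$; $V:=\{v\in L^2(D;\mathbb R^2):\operatorname{curl}v\text{ is a finite Radon measure on }D\}$. $\mathcal G_{h_0}(v,\vec A)=\frac12\big[\|v-\hat A\|^2_{L^2(D)}+|\operatorname{curl}v|(D)+\|\nabla\times\vec A-h_0\vec e_3\|^2_{L^2(\mathbb R^3)}\big]$ (with $+\infty$ if $\operatorname{curl}v$ is not a finite measure). The components $A_0^1,A_0^2$ of a minimizer are continuous, so their traces on the planes $x_3=ns$ are defined classically. $\chi_0=\chi_{(0,s)}(x_3)$, $\chi_n=\chi_{[ns,(n+1)s)}(x_3)$ for $1\le n\le N-1$. *)

theory Defs
  imports "HOL-Analysis.Analysis"
begin

definition partial :: "'n::finite \<Rightarrow> (real^'n \<Rightarrow> real) \<Rightarrow> real^'n \<Rightarrow> real" where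
  "partial i f x = deriv (\<lambda>t. f (x + t *\<^sub>R axis i 1)) 0"

fun iter_partial :: "'n::finite list \<Rightarrow> (real^'n \<Rightarrow> real) \<Rightarrow> real^'n \<Rightarrow> real" where
  "iter_partial [] f = f"
| "iter_partial (i # is) f = partial i (iter_partial is f)"

definition smooth_fun :: "(real^'n::finite \<Rightarrow> real) \<Rightarrow> bool" where
  "smooth_fun f \<longleftrightarrow>
     (\<forall>is. continuous_on UNIV (iter_partial is f) \<and>
        (\<forall>i x. (\<lambda>t. iter_partial is f (x + t *\<^sub>R axis i 1)) differentiable (at 0)))"

definition test_fun :: "(real^'n::finite) set \<Rightarrow> (real^'n \<Rightarrow> real) \<Rightarrow> bool" where
  "test_fun U \<phi> \<longleftrightarrow> smooth_fun \<phi> \<and> compact (closure {x. \<phi> x \<noteq> 0})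
      \<and> closure {x. \<phi> x \<noteq> 0} \<subseteq> U"

definition smooth_domain :: "(real^2) set \<Rightarrow> bool" where
  "smooth_domain \<Omega> \<longleftrightarrow> open \<Omega> \<and> bounded \<Omega> \<and>
     (\<exists>\<rho>. smooth_fun \<rho> \<and> \<Omega> = {y. \<rho> y < 0} \<and>
        (\<forall>y. \<rho> y = 0 \<longrightarrow> (\<exists>i. partial i \<rho> y \<noteq> 0)))"

definition Lp_on :: "(real^'n::finite) set \<Rightarrow> real \<Rightarrow> (real^'n \<Rightarrow> real) \<Rightarrow> bool" where
  "Lp_on S p f \<longleftrightarrow> f \<in> borel_measurable (lebesgue_on S) \<and>
     (\<integral>\<^sup>+x\<in>S. ennreal (\<bar>f x\<bar> powr p) \<partial>lebesgue) < \<infinity>"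

definition L2loc :: "(real^'n::finite \<Rightarrow> real) \<Rightarrow> bool" where
  "L2loc f \<longleftrightarrow> (\<forall>K. compact K \<longrightarrow> Lp_on K 2 f)"

definition loc_integrable_on :: "(real^'n::finite) set \<Rightarrow> (real^'n \<Rightarrow> real) \<Rightarrow> bool" where
  "loc_integrable_on U f \<longleftrightarrow> (\<forall>K. compact K \<and> K \<subseteq> U \<longrightarrow> set_integrable lebesgue K f)"

definition weak_partial :: "(real^'n::finite) set \<Rightarrow> 'n \<Rightarrow> (real^'n \<Rightarrow> real) \<Rightarrow> (real^'n \<Rightarrow> real) \<Rightarrow> bool" where
  "weak_partial U i f g \<longleftrightarrow> loc_integrable_on U f \<and> loc_integrable_on U g \<and>
     (\<forall>\<phi>. test_fun U \<phi> \<longrightarrow>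
        (LINT x|lebesgue. f x * partial i \<phi> x) = - (LINT x|lebesgue. g x * \<phi> x))"

text \<open>The (a.e. unique) weak partial derivative on R^n.\<close>
definition wpd :: "'n::finite \<Rightarrow> (real^'n \<Rightarrow> real) \<Rightarrow> real^'n \<Rightarrow> real" where
  "wpd i f = (SOME g. weak_partial UNIV i f g)"

definition proj12 :: "real^3 \<Rightarrow> real^2" where
  "proj12 y = (\<chi> i. if i = 1 then y $ 1 else y $ 2)"

definition mk3 :: "real^2 \<Rightarrow> real \<Rightarrow> real^3" where
  "mk3 p t = (\<chi> i. if i = 1 then p $ 1 else if i = 2 then p $ 2 else t)"

definition cyl :: "(real^2) set \<Rightarrow> real \<Rightarrow> (real^3) set" where
  "cyl \<Omega> L = {x. proj12 x \<in> \<Omega> \<and> 0 < x $ 3 \<and> x $ 3 < L}"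

definition avec :: "real^3 \<Rightarrow> real^3" where
  "avec x = (\<chi> i. if i = 1 then - x $ 2 / 2 else if i = 2 then x $ 1 / 2 else 0)"

definition e3 :: "real^3" where "e3 = axis 3 1"

definition comp :: "(real^3 \<Rightarrow> real^3) \<Rightarrow> 3 \<Rightarrow> real^3 \<Rightarrow> real" where
  "comp A j = (\<lambda>x. A x $ j)"

definition H1loc :: "(real^3 \<Rightarrow> real^3) \<Rightarrow> bool" where
  "H1loc A \<longleftrightarrow> (\<forall>j i. L2loc (comp A j) \<and>
      (\<exists>g. weak_partial UNIV i (comp A j) g \<and> L2loc g))"

definition wcurl :: "(real^3 \<Rightarrow> real^3) \<Rightarrow> real^3 \<Rightarrow> real^3" where
  "wcurl A x = (\<chi> k. if k = 1 then wpd 2 (comp A 3) x - wpd 3 (comp A 2) x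
                 else if k = 2 then wpd 3 (comp A 1) x - wpd 1 (comp A 3) x
                 else wpd 1 (comp A 2) x - wpd 2 (comp A 1) x)"

definition wdiv :: "(real^3 \<Rightarrow> real^3) \<Rightarrow> real^3 \<Rightarrow> real" where
  "wdiv A x = wpd 1 (comp A 1) x + wpd 2 (comp A 2) x + wpd 3 (comp A 3) x"

definition L2norm_sq :: "(real^'n::finite) set \<Rightarrow> (real^'n \<Rightarrow> real^'m::finite) \<Rightarrow> ennreal" where
  "L2norm_sq S f = (\<integral>\<^sup>+x\<in>S. ennreal ((norm (f x))\<^sup>2) \<partial>lebesgue)"

definition L2_vec :: "(real^'n::finite) set \<Rightarrow> (real^'n \<Rightarrow> real^'m::finite) \<Rightarrow> bool" where
  "L2_vec S f \<longleftrightarrow> f \<in> borel_measurable (lebesgue_on S) \<and> L2norm_sq S f < \<infinity>"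

definition cgrad :: "(real^3 \<Rightarrow> real) \<Rightarrow> real^3 \<Rightarrow> real^3" where
  "cgrad \<phi> x = (\<chi> i. partial i \<phi> x)"

definition wgrad :: "(real^3 \<Rightarrow> real) \<Rightarrow> real^3 \<Rightarrow> real^3" where
  "wgrad u x = (\<chi> i. wpd i u x)"

text \<open>Scalar u lies in (check H^1) \<inter> L^6(R^3): u is in L^6, has an L^2 weak gradient, and
  is the limit of C_c^infinity functions both in the Dirichlet seminorm and in L^6
  (i.e. u is the function representing an element of the completion of C_c^infinity
  under the Dirichlet norm).\<close>
definition checkH1_L6 :: "(real^3 \<Rightarrow> real) \<Rightarrow> bool" where
  "checkH1_L6 u \<longleftrightarrow> Lp_on UNIV 6 u \<and>
     (\<forall>i. weak_partial UNIV i u (wpd i u)) \<and> L2_vec UNIV (wgrad u) \<and>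
     (\<exists>\<phi>::nat \<Rightarrow> real^3 \<Rightarrow> real. (\<forall>k. test_fun UNIV (\<phi> k)) \<and>
        (\<lambda>k. L2norm_sq UNIV (\<lambda>x. cgrad (\<phi> k) x - wgrad u x)) \<longlonglongrightarrow> 0 \<and>
        (\<lambda>k. \<integral>\<^sup>+x. ennreal (\<bar>\<phi> k x - u x\<bar> powr 6) \<partial>lebesgue) \<longlonglongrightarrow> 0)"

definition E0 :: "real \<Rightarrow> (real^3 \<Rightarrow> real^3) set" where
  "E0 h0 = {C. H1loc C \<and> L2_vec UNIV (\<lambda>x. wcurl C x - h0 *\<^sub>R e3)}"

definition K0 :: "real \<Rightarrow> (real^3 \<Rightarrow> real^3) set" where
  "K0 h0 = {C. C \<in> E0 h0 \<and> (AE x in lebesgue. wdiv C x = 0) \<and>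
               (\<forall>j. checkH1_L6 (\<lambda>x. C x $ j - h0 * avec x $ j))}"

text \<open>Total variation |curl v|(D) of the distributional 2D curl of v on D (in ereal;
  it is finite iff curl v is a finite Radon measure on D).\<close>
definition curl_TV :: "(real^3) set \<Rightarrow> (real^3 \<Rightarrow> real^2) \<Rightarrow> ereal" where
  "curl_TV D v = (SUP \<phi> \<in> {\<phi>. test_fun D \<phi> \<and> (\<forall>x. \<bar>\<phi> x\<bar> \<le> 1)}.
      ereal (LINT x|lebesgue. v x $ 1 * partial 2 \<phi> x - v x $ 2 * partial 1 \<phi> x))"

definition Vspace :: "(real^3) set \<Rightarrow> (real^3 \<Rightarrow> real^2) set" where
  "Vspace D = {v. L2_vec D v \<and> curl_TV D v < \<infinity>}"

definition Gfun :: "(real^3) set \<Rightarrow> real \<Rightarrow> (real^3 \<Rightarrow> real^2) \<Rightarrow> (real^3 \<Rightarrow> real^3) \<Rightarrow> ereal" where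
  "Gfun D h0 v A = ereal (1/2) * (enn2ereal (L2norm_sq D (\<lambda>x. v x - proj12 (A x)))
        + curl_TV D v + enn2ereal (L2norm_sq UNIV (\<lambda>x. wcurl A x - h0 *\<^sub>R e3)))"

definition chi :: "real \<Rightarrow> nat \<Rightarrow> real \<Rightarrow> real" where
  "chi s n t = (if n = 0 then indicator {0<..<s} t else indicator {real n * s..<real (n+1) * s} t)"

definition Ahat_eps_s :: "real \<Rightarrow> real \<Rightarrow> nat \<Rightarrow> (real^3 \<Rightarrow> real^3) \<Rightarrow> real^3 \<Rightarrow> real^2" where
  "Ahat_eps_s L eps N Aeps x =
     (\<Sum>n<N. (chi (L / real N) n (x $ 3) / \<bar>ln eps\<bar>) *\<^sub>R proj12 (Aeps (mk3 (proj12 x) (real n * (L / real N)))))"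

end

theory Submission
  imports Defs
begin

text \<open>Minimality of \<open>(v\<^sub>0, A\<^sub>0)\<close> enters only through the continuity of the tangential
  components of \<open>A\<^sub>0\<close>, which the statement supplies as a continuous representative \<open>B\<close>.
  These components are uniformly continuous on a ball containing the bounded cylinder \<open>D\<close>.
  On the slab \<open>ns \<le> x\<^sub>3 < (n+1)s\<close> the approximation evaluates them at \<open>(x\<^sub>1, x\<^sub>2, ns)\<close>, at
  distance less than \<open>s\<close> from \<open>x\<close>, and the remaining gauge term
  \<open>(h\<^sub>e\<^sub>x/|ln \<epsilon>| - h\<^sub>0) a(x)\<close> is uniformly small on \<open>D\<close>. So the approximation converges
  uniformly on a set of finite measure, hence in \<open>L\<^sup>2\<close>.\<close>

lemma L2norm_sq_le_emeasure:
  assumes "D \<in> sets lebesgue" and "AE x in lebesgue. x \<in> D \<longrightarrow> norm (f x) \<le> c"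
  shows "L2norm_sq D f \<le> ennreal (c\<^sup>2) * emeasure lebesgue D"
proof -
  have "AE x in lebesgue. ennreal ((norm (f x))\<^sup>2) * indicator D x \<le> ennreal (c\<^sup>2) * indicator D x"
    using assms(2)
  proof eventually_elim
    case (elim x)
    show ?case
    proof (cases "x \<in> D")
      case True
      then have "(norm (f x))\<^sup>2 \<le> c\<^sup>2"
        using elim by (intro power_mono) auto
      then show ?thesis using True by (simp add: ennreal_leI)
    qed simp
  qed
  then have "L2norm_sq D f \<le> (\<integral>\<^sup>+x. ennreal (c\<^sup>2) * indicator D x \<partial>lebesgue)"
    unfolding L2norm_sq_def by (rule nn_integral_mono_AE)
  also have "\<dots> = ennreal (c\<^sup>2) * emeasure lebesgue D"
    using assms(1) by (rule nn_integral_cmult_indicator)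
  finally show ?thesis .
qed

lemma tendsto_L2norm_sq_zero_if_uniform:
  fixes f :: "'i \<Rightarrow> real^'n::finite \<Rightarrow> real^'m::finite"
  assumes "D \<in> sets lebesgue" and "emeasure lebesgue D < \<infinity>"
    and uniform: "\<And>\<eta>. \<eta> > 0 \<Longrightarrow> eventually (\<lambda>i. AE x in lebesgue. x \<in> D \<longrightarrow> norm (f i x) \<le> \<eta>) F"
  shows "((\<lambda>i. L2norm_sq D (f i)) \<longlongrightarrow> 0) F"
proof (rule order_tendstoI)
  fix a :: ennreal
  assume "0 < a"
  obtain \<mu> where \<mu>: "emeasure lebesgue D = ennreal \<mu>" "\<mu> \<ge> 0"
    using assms(2) by (cases "emeasure lebesgue D" rule: ennreal_cases) auto
  have "((\<lambda>\<eta>. ennreal (\<eta>\<^sup>2 * \<mu>)) \<longlongrightarrow> ennreal (0\<^sup>2 * \<mu>)) (at_right 0)"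
    by (intro tendsto_intros)
  then have "eventually (\<lambda>\<eta>. ennreal (\<eta>\<^sup>2 * \<mu>) < a) (at_right 0)"
    using \<open>0 < a\<close> by (simp add: order_tendstoD(2))
  moreover have "eventually (\<lambda>\<eta>::real. \<eta> > 0) (at_right 0)"
    by (simp add: eventually_at_right_less)
  ultimately have "eventually (\<lambda>\<eta>. \<eta> > 0 \<and> ennreal (\<eta>\<^sup>2 * \<mu>) < a) (at_right 0)"
    by (simp add: eventually_conj)
  then obtain \<eta> where "\<eta> > 0" and small: "ennreal (\<eta>\<^sup>2 * \<mu>) < a"
    using eventually_happens'[OF trivial_limit_at_right_real] by blast
  show "eventually (\<lambda>i. L2norm_sq D (f i) < a) F"
    using uniform[OF \<open>\<eta> > 0\<close>]
  proof eventually_elim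
    case (elim i)
    have "L2norm_sq D (f i) \<le> ennreal (\<eta>\<^sup>2) * ennreal \<mu>"
      using L2norm_sq_le_emeasure[OF assms(1) elim] unfolding \<mu>(1) .
    also have "\<dots> = ennreal (\<eta>\<^sup>2 * \<mu>)"
      using \<mu>(2) by (simp add: ennreal_mult)
    finally show ?case using small by simp
  qed
qed simp

lemma proj12_nth [simp]: "proj12 y $ 1 = y $ 1" "proj12 y $ 2 = y $ 2"
  by (simp_all add: proj12_def)

lemma mk3_nth [simp]: "mk3 p t $ 1 = p $ 1" "mk3 p t $ 2 = p $ 2" "mk3 p t $ 3 = t"
  by (simp_all add: mk3_def)

lemma mk3_proj12: "mk3 (proj12 x) (x $ 3) = x"
  by (simp add: vec_eq_iff forall_3)

lemma proj12_add [simp]: "proj12 (a + b) = proj12 a + proj12 b"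
  by (simp add: vec_eq_iff forall_2)

lemma proj12_scaleR [simp]: "proj12 (c *\<^sub>R a) = c *\<^sub>R proj12 a"
  by (simp add: vec_eq_iff forall_2)

lemma proj12_avec_mk3 [simp]: "proj12 (avec (mk3 (proj12 x) t)) = proj12 (avec x)"
  by (simp add: vec_eq_iff forall_2 avec_def)

lemma norm_proj12_avec_le: "norm (proj12 (avec x)) \<le> norm x"
proof -
  have "norm (proj12 (avec x)) \<le> \<bar>x$2\<bar> / 2 + \<bar>x$1\<bar> / 2"
    using norm_le_l1_cart[of "proj12 (avec x)"] by (simp add: sum_2 avec_def)
  also have "\<dots> \<le> norm x"
    using component_le_norm_cart[of x 1] component_le_norm_cart[of x 2] by simp
  finally show ?thesis .
qed

lemma norm_mk3_le: "norm (mk3 p t) \<le> 2 * norm p + \<bar>t\<bar>"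
proof -
  have "norm (mk3 p t) \<le> \<bar>p$1\<bar> + \<bar>p$2\<bar> + \<bar>t\<bar>"
    using norm_le_l1_cart[of "mk3 p t"] by (simp add: sum_3)
  then show ?thesis
    using component_le_norm_cart[of p 1] component_le_norm_cart[of p 2] by linarith
qed

lemma norm_mk3_proj12_diff_le: "norm (mk3 (proj12 x) t - x) \<le> \<bar>x$3 - t\<bar>"
  using norm_le_l1_cart[of "mk3 (proj12 x) t - x"] by (simp add: sum_3)

lemma continuous_on_proj12_comp:
  assumes "continuous_on UNIV (\<lambda>x. B x $ 1)" and "continuous_on UNIV (\<lambda>x. B x $ 2)"
  shows "continuous_on UNIV (\<lambda>x. proj12 (B x))"
  unfolding proj12_def
proof (intro continuous_on_vec_lambda)
  fix i :: 2
  show "continuous_on UNIV (\<lambda>x. if i = 1 then B x $ 1 else B x $ 2)"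
    using assms by (cases "i = 1") auto
qed

lemma open_cyl:
  assumes "open \<Omega>"
  shows "open (cyl \<Omega> L)"
proof -
  have "continuous_on UNIV proj12"
    using continuous_on_proj12_comp[of "\<lambda>x. x"] by (simp add: continuous_on_component)
  then have "open (proj12 -` \<Omega>)"
    using assms by (simp add: open_vimage)
  moreover have "open {x::real^3. 0 < x$3}" "open {x::real^3. x$3 < L}"
    by (auto intro!: open_Collect_less continuous_intros)
  moreover have "cyl \<Omega> L = proj12 -` \<Omega> \<inter> {x. 0 < x$3} \<inter> {x. x$3 < L}"
    by (auto simp: cyl_def)
  ultimately show ?thesis by auto
qed

lemma cyl_slice_norm_bound:
  assumes "bounded \<Omega>"
  obtains R where
    "\<And>x t. x \<in> cyl \<Omega> L \<Longrightarrow> 0 \<le> t \<Longrightarrow> t \<le> x$3 \<Longrightarrow> norm (mk3 (proj12 x) t) \<le> R"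
proof -
  obtain M where M: "\<And>p. p \<in> \<Omega> \<Longrightarrow> norm p \<le> M"
    using assms bounded_iff by metis
  show ?thesis
  proof
    fix x t assume "x \<in> cyl \<Omega> L" "0 \<le> t" "t \<le> x$3"
    then have "norm (proj12 x) \<le> M" "\<bar>t\<bar> \<le> \<bar>L\<bar>"
      using M by (auto simp: cyl_def)
    then show "norm (mk3 (proj12 x) t) \<le> 2 * M + \<bar>L\<bar>"
      using norm_mk3_le[of "proj12 x" t] by linarith
  qed
qed

lemma emeasure_cyl_finite:
  assumes "open \<Omega>" and "bounded \<Omega>"
  shows "emeasure lebesgue (cyl \<Omega> L) < \<infinity>"
proof -
  obtain R where R: "\<And>x t. x \<in> cyl \<Omega> L \<Longrightarrow> 0 \<le> t \<Longrightarrow> t \<le> x$3 \<Longrightarrow> norm (mk3 (proj12 x) t) \<le> R"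
    using cyl_slice_norm_bound[OF assms(2)] by blast
  have "norm x \<le> R" if "x \<in> cyl \<Omega> L" for x
    using R[OF that, of "x$3"] that by (simp add: mk3_proj12 cyl_def)
  then have "bounded (cyl \<Omega> L)"
    by (auto simp: bounded_iff)
  then show ?thesis
    using emeasure_bounded_finite[of "cyl \<Omega> L"] open_cyl[OF assms(1)] by simp
qed

text \<open>\<open>chi s 0\<close> is the indicator of the open interval \<open>(0, s)\<close>; the hypothesis \<open>0 < t\<close> makes all
  slabs uniformly half-open.\<close>

lemma chi_eq_slab_indicator:
  assumes "0 < t"
  shows "chi s n t = (if real n * s \<le> t \<and> t < (real n + 1) * s then 1 else 0)"
  using assms by (auto simp: chi_def indicator_def algebra_simps)

lemma slab_iff_floor:
  assumes "s > 0" and "0 \<le> t"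
  shows "real n * s \<le> t \<and> t < (real n + 1) * s \<longleftrightarrow> n = nat \<lfloor>t / s\<rfloor>"
proof -
  have "real n * s \<le> t \<and> t < (real n + 1) * s \<longleftrightarrow> of_int (int n) \<le> t / s \<and> t / s < of_int (int n) + 1"
    using assms(1) by (simp add: le_divide_eq divide_less_eq)
  also have "\<dots> \<longleftrightarrow> \<lfloor>t / s\<rfloor> = int n"
    by (simp only: floor_eq_iff)
  also have "\<dots> \<longleftrightarrow> n = nat \<lfloor>t / s\<rfloor>"
    using assms by auto
  finally show ?thesis .
qed

lemma Ahat_eps_s_slice:
  assumes "N \<ge> 1" and "0 < x$3" and "x$3 < L"
  obtains t where "0 \<le> t" "t \<le> x$3" "x$3 - t < L / real N"
    and "Ahat_eps_s L eps N A x = (1 / \<bar>ln eps\<bar>) *\<^sub>R proj12 (A (mk3 (proj12 x) t))"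
proof -
  define s where "s = L / real N"
  have "s > 0" using assms by (simp add: s_def)
  define n0 where "n0 = nat \<lfloor>x$3 / s\<rfloor>"
  have slab_iff: "real n * s \<le> x$3 \<and> x$3 < (real n + 1) * s \<longleftrightarrow> n = n0" for n
    using slab_iff_floor[OF \<open>s > 0\<close>] assms(2) by (simp add: n0_def)
  then have slab: "real n0 * s \<le> x$3" "x$3 < (real n0 + 1) * s" by blast+
  have "real n0 * s < real N * s"
    using slab(1) assms by (simp add: s_def)
  then have "n0 < N" using \<open>s > 0\<close> by simp
  have "Ahat_eps_s L eps N A x
      = (\<Sum>n<N. if n = n0 then (1 / \<bar>ln eps\<bar>) *\<^sub>R proj12 (A (mk3 (proj12 x) (real n * s))) else 0)"
    unfolding Ahat_eps_s_def s_def[symmetric]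
    by (intro sum.cong) (auto simp: chi_eq_slab_indicator[OF assms(2)] slab_iff)
  also have "\<dots> = (1 / \<bar>ln eps\<bar>) *\<^sub>R proj12 (A (mk3 (proj12 x) (real n0 * s)))"
    using \<open>n0 < N\<close> by simp
  finally have "Ahat_eps_s L eps N A x = (1 / \<bar>ln eps\<bar>) *\<^sub>R proj12 (A (mk3 (proj12 x) (real n0 * s)))" .
  moreover have "x$3 - real n0 * s < L / real N"
    using slab(2) by (simp add: s_def[symmetric] algebra_simps)
  ultimately show ?thesis
    using that[of "real n0 * s"] slab(1) \<open>s > 0\<close> by simp
qed

lemma Ahat_eps_s_gauge_error:
  assumes "N \<ge> 1" and "0 < eps" "eps < 1" and "0 < x$3" "x$3 < L"
  obtains t where "0 \<le> t" "t \<le> x$3" "x$3 - t < L / real N"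
    and "norm (Ahat_eps_s L eps N (\<lambda>y. \<bar>ln eps\<bar> *\<^sub>R B y + (k - h0 * \<bar>ln eps\<bar>) *\<^sub>R avec y) x
               - proj12 (B x))
           \<le> norm (proj12 (B (mk3 (proj12 x) t)) - proj12 (B x)) + \<bar>k / \<bar>ln eps\<bar> - h0\<bar> * norm x"
proof -
  let ?l = "\<bar>ln eps\<bar>" and ?c = "k / \<bar>ln eps\<bar> - h0"
  obtain t where t: "0 \<le> t" "t \<le> x$3" "x$3 - t < L / real N"
    and slice: "Ahat_eps_s L eps N (\<lambda>y. ?l *\<^sub>R B y + (k - h0 * ?l) *\<^sub>R avec y) x
      = (1 / ?l) *\<^sub>R proj12 (?l *\<^sub>R B (mk3 (proj12 x) t) + (k - h0 * ?l) *\<^sub>R avec (mk3 (proj12 x) t))"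
    using Ahat_eps_s_slice[OF assms(1,4,5)] by blast
  have "?l > 0" using assms(2,3) by simp
  then have "(1 / ?l) * ?l = 1" and "(1 / ?l) * (k - h0 * ?l) = ?c"
    by (simp_all add: field_simps)
  then have eq: "Ahat_eps_s L eps N (\<lambda>y. ?l *\<^sub>R B y + (k - h0 * ?l) *\<^sub>R avec y) x
      = proj12 (B (mk3 (proj12 x) t)) + ?c *\<^sub>R proj12 (avec x)"
    unfolding slice
    by (simp only: proj12_add proj12_scaleR proj12_avec_mk3 scaleR_add_right scaleR_scaleR scaleR_one)
  have "norm (Ahat_eps_s L eps N (\<lambda>y. ?l *\<^sub>R B y + (k - h0 * ?l) *\<^sub>R avec y) x - proj12 (B x))
      = norm ((proj12 (B (mk3 (proj12 x) t)) - proj12 (B x)) + ?c *\<^sub>R proj12 (avec x))"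
    unfolding eq by (simp add: algebra_simps)
  also have "\<dots> \<le> norm (proj12 (B (mk3 (proj12 x) t)) - proj12 (B x)) + norm (?c *\<^sub>R proj12 (avec x))"
    by (rule norm_triangle_ineq)
  also have "\<dots> \<le> norm (proj12 (B (mk3 (proj12 x) t)) - proj12 (B x)) + \<bar>?c\<bar> * norm x"
    using mult_left_mono[OF norm_proj12_avec_le, of "\<bar>?c\<bar>" x] by simp
  finally show ?thesis
    using that[OF t] by simp
qed

lemma eventually_at_right_0_times_sequentially_small:
  fixes g :: "real \<Rightarrow> real"
  assumes "(g \<longlongrightarrow> 0) (at_right 0)" and "e > 0" and "\<delta> > 0"
  shows "\<forall>\<^sub>F (eps, N) in at_right 0 \<times>\<^sub>F sequentially.
           (g eps < e \<and> 0 < eps \<and> eps < 1) \<and> (L / real N < \<delta> \<and> 1 \<le> N)"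
proof -
  have "\<forall>\<^sub>F eps in at_right 0. eps < (1::real)"
    by (rule order_tendstoD(2)[OF tendsto_ident_at]) simp
  then have eps: "\<forall>\<^sub>F eps in at_right 0. g eps < e \<and> 0 < eps \<and> eps < 1"
    using order_tendstoD(2)[OF assms(1,2)] eventually_at_right_less[of 0] by (intro eventually_conj)
  have N: "\<forall>\<^sub>F N in sequentially. L / real N < \<delta> \<and> 1 \<le> N"
    using order_tendstoD(2)[OF lim_const_over_n \<open>\<delta> > 0\<close>] eventually_ge_at_top[of 1]
    by (intro eventually_conj)
  show ?thesis
    using eventually_prodI[OF eps N] by (simp add: case_prod_unfold)
qed

lemma Ahat_eps_s_uniform_approx:
  fixes B :: "real^3 \<Rightarrow> real^3"
  assumes "bounded \<Omega>"
    and "continuous_on UNIV (\<lambda>x. B x $ 1)" and "continuous_on UNIV (\<lambda>x. B x $ 2)"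
    and hex: "((\<lambda>eps. hex eps / \<bar>ln eps\<bar>) \<longlongrightarrow> h0) (at_right 0)"
    and "\<eta> > 0"
  shows "\<forall>\<^sub>F (eps, N) in at_right 0 \<times>\<^sub>F sequentially. \<forall>x \<in> cyl \<Omega> L.
           norm (Ahat_eps_s L eps N (\<lambda>y. \<bar>ln eps\<bar> *\<^sub>R B y + (hex eps - h0 * \<bar>ln eps\<bar>) *\<^sub>R avec y) x
                 - proj12 (B x)) \<le> \<eta>"
proof -
  obtain R where R: "\<And>x t. x \<in> cyl \<Omega> L \<Longrightarrow> 0 \<le> t \<Longrightarrow> t \<le> x$3 \<Longrightarrow> mk3 (proj12 x) t \<in> cball 0 R"
    using cyl_slice_norm_bound[OF assms(1)] by (metis mem_cball_0)
  have "uniformly_continuous_on (cball 0 R) (\<lambda>x. proj12 (B x))"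
    using continuous_on_proj12_comp[OF assms(2,3)]
    by (intro compact_uniformly_continuous) (auto intro: continuous_on_subset)
  then obtain \<delta> where "\<delta> > 0" and \<delta>: "\<And>x y. x \<in> cball 0 R \<Longrightarrow> y \<in> cball 0 R \<Longrightarrow> dist y x < \<delta>
      \<Longrightarrow> dist (proj12 (B y)) (proj12 (B x)) < \<eta> / 2"
    using \<open>\<eta> > 0\<close> unfolding uniformly_continuous_on_def by (meson half_gt_zero)
  have "((\<lambda>eps. \<bar>hex eps / \<bar>ln eps\<bar> - h0\<bar> * R) \<longlongrightarrow> \<bar>h0 - h0\<bar> * R) (at_right 0)"
    by (intro tendsto_intros hex)
  then have "((\<lambda>eps. \<bar>hex eps / \<bar>ln eps\<bar> - h0\<bar> * R) \<longlongrightarrow> 0) (at_right 0)"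
    by simp
  from eventually_at_right_0_times_sequentially_small[OF this half_gt_zero[OF \<open>\<eta> > 0\<close>] \<open>\<delta> > 0\<close>, of L]
  show ?thesis
  proof (rule eventually_mono, clarify)
    fix eps N x
    assume gauge: "\<bar>hex eps / \<bar>ln eps\<bar> - h0\<bar> * R < \<eta> / 2" and "0 < eps" "eps < 1"
      and "L / real N < \<delta>" "1 \<le> N" and "x \<in> cyl \<Omega> L"
    then have "0 < x$3" "x$3 < L" by (auto simp: cyl_def)
    then obtain t where t: "0 \<le> t" "t \<le> x$3" "x$3 - t < L / real N"
      and err: "norm (Ahat_eps_s L eps N (\<lambda>y. \<bar>ln eps\<bar> *\<^sub>R B y + (hex eps - h0 * \<bar>ln eps\<bar>) *\<^sub>R avec y) x
                 - proj12 (B x))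
           \<le> norm (proj12 (B (mk3 (proj12 x) t)) - proj12 (B x)) + \<bar>hex eps / \<bar>ln eps\<bar> - h0\<bar> * norm x"
      using Ahat_eps_s_gauge_error[OF \<open>1 \<le> N\<close> \<open>0 < eps\<close> \<open>eps < 1\<close>] by blast
    have x_R: "x \<in> cball 0 R"
      using R[OF \<open>x \<in> cyl \<Omega> L\<close>, of "x$3"] \<open>0 < x$3\<close> by (simp add: mk3_proj12)
    have "dist (mk3 (proj12 x) t) x < \<delta>"
      using norm_mk3_proj12_diff_le[of x t] t \<open>L / real N < \<delta>\<close> by (simp add: dist_norm)
    then have "norm (proj12 (B (mk3 (proj12 x) t)) - proj12 (B x)) < \<eta> / 2"
      using \<delta>[OF x_R R[OF \<open>x \<in> cyl \<Omega> L\<close> t(1,2)]] by (simp add: dist_norm)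
    moreover have "\<bar>hex eps / \<bar>ln eps\<bar> - h0\<bar> * norm x \<le> \<bar>hex eps / \<bar>ln eps\<bar> - h0\<bar> * R"
      using x_R by (intro mult_left_mono) auto
    ultimately show "norm (Ahat_eps_s L eps N (\<lambda>y. \<bar>ln eps\<bar> *\<^sub>R B y + (hex eps - h0 * \<bar>ln eps\<bar>) *\<^sub>R avec y) x
                 - proj12 (B x)) \<le> \<eta>"
      using err gauge by linarith
  qed
qed

lemma tendsto_L2norm_sq_Ahat_eps_s:
  fixes B A0 :: "real^3 \<Rightarrow> real^3"
  assumes "open \<Omega>" and "bounded \<Omega>"
    and cont: "continuous_on UNIV (\<lambda>x. B x $ 1)" "continuous_on UNIV (\<lambda>x. B x $ 2)"
    and ae: "AE x in lebesgue. B x = A0 x"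
    and hex: "((\<lambda>eps. hex eps / \<bar>ln eps\<bar>) \<longlongrightarrow> h0) (at_right 0)"
  shows "((\<lambda>(eps, N). L2norm_sq (cyl \<Omega> L)
            (\<lambda>x. Ahat_eps_s L eps N
                   (\<lambda>y. \<bar>ln eps\<bar> *\<^sub>R B y + (hex eps - h0 * \<bar>ln eps\<bar>) *\<^sub>R avec y) x
                 - proj12 (A0 x)))
         \<longlongrightarrow> 0) (at_right 0 \<times>\<^sub>F sequentially)"
proof -
  define Ahat where "Ahat eps N = Ahat_eps_s L eps N
    (\<lambda>y. \<bar>ln eps\<bar> *\<^sub>R B y + (hex eps - h0 * \<bar>ln eps\<bar>) *\<^sub>R avec y)" for eps N
  have "((\<lambda>i. L2norm_sq (cyl \<Omega> L) (\<lambda>x. Ahat (fst i) (snd i) x - proj12 (A0 x))) \<longlongrightarrow> 0)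
          (at_right 0 \<times>\<^sub>F sequentially)"
  proof (rule tendsto_L2norm_sq_zero_if_uniform)
    show "cyl \<Omega> L \<in> sets lebesgue"
      using open_cyl[OF \<open>open \<Omega>\<close>] by simp
    show "emeasure lebesgue (cyl \<Omega> L) < \<infinity>"
      using emeasure_cyl_finite[OF \<open>open \<Omega>\<close> \<open>bounded \<Omega>\<close>] .
    fix \<eta> :: real
    assume "\<eta> > 0"
    have "\<forall>\<^sub>F i in at_right 0 \<times>\<^sub>F sequentially.
            \<forall>x \<in> cyl \<Omega> L. norm (Ahat (fst i) (snd i) x - proj12 (B x)) \<le> \<eta>"
      using Ahat_eps_s_uniform_approx[OF \<open>bounded \<Omega>\<close> cont hex \<open>\<eta> > 0\<close>, of L]
      by (simp add: case_prod_unfold Ahat_def)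
    then show "\<forall>\<^sub>F i in at_right 0 \<times>\<^sub>F sequentially.
            AE x in lebesgue. x \<in> cyl \<Omega> L \<longrightarrow> norm (Ahat (fst i) (snd i) x - proj12 (A0 x)) \<le> \<eta>"
    proof (rule eventually_mono)
      fix i :: "real \<times> nat"
      assume close: "\<forall>x \<in> cyl \<Omega> L. norm (Ahat (fst i) (snd i) x - proj12 (B x)) \<le> \<eta>"
      show "AE x in lebesgue. x \<in> cyl \<Omega> L \<longrightarrow> norm (Ahat (fst i) (snd i) x - proj12 (A0 x)) \<le> \<eta>"
        using ae by eventually_elim (use close in auto)
    qed
  qed
  then show ?thesis
    by (simp add: case_prod_unfold Ahat_def)
qed

theorem theorem5p1:
  fixes \<Omega> :: "(real^2) set" and L h0 :: real and hex :: "real \<Rightarrow> real"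
    and v0 :: "real^3 \<Rightarrow> real^2" and A0 :: "real^3 \<Rightarrow> real^3"
  assumes "smooth_domain \<Omega>" and "simply_connected \<Omega>" and "L > 0"
    and "\<forall>eps>0. hex eps > 0"
    and "h0 \<ge> 0"
    and "((\<lambda>eps. hex eps / \<bar>ln eps\<bar>) \<longlongrightarrow> h0) (at_right 0)"
    and "v0 \<in> Vspace (cyl \<Omega> L)" and "A0 \<in> K0 h0"
    and "\<forall>v \<in> Vspace (cyl \<Omega> L). \<forall>A \<in> K0 h0.
           Gfun (cyl \<Omega> L) h0 v0 A0 \<le> Gfun (cyl \<Omega> L) h0 v A"
  shows "\<forall>B :: real^3 \<Rightarrow> real^3.
           (AE x in lebesgue. B x = A0 x) \<and> continuous_on UNIV (\<lambda>x. B x $ 1)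
             \<and> continuous_on UNIV (\<lambda>x. B x $ 2) \<longrightarrow>
           ((\<lambda>(eps, N). L2norm_sq (cyl \<Omega> L)
               (\<lambda>x. Ahat_eps_s L eps N
                      (\<lambda>y. \<bar>ln eps\<bar> *\<^sub>R B y + (hex eps - h0 * \<bar>ln eps\<bar>) *\<^sub>R avec y) x
                    - proj12 (A0 x)))
            \<longlongrightarrow> 0) (at_right 0 \<times>\<^sub>F sequentially)"
proof (intro allI impI, elim conjE)
  fix B :: "real^3 \<Rightarrow> real^3"
  assume "AE x in lebesgue. B x = A0 x"
    and "continuous_on UNIV (\<lambda>x. B x $ 1)" "continuous_on UNIV (\<lambda>x. B x $ 2)"
  moreover have "open \<Omega>" "bounded \<Omega>"
    using assms(1) by (simp_all add: smooth_domain_def)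
  ultimately show "((\<lambda>(eps, N). L2norm_sq (cyl \<Omega> L)
               (\<lambda>x. Ahat_eps_s L eps N
                      (\<lambda>y. \<bar>ln eps\<bar> *\<^sub>R B y + (hex eps - h0 * \<bar>ln eps\<bar>) *\<^sub>R avec y) x
                    - proj12 (A0 x)))
            \<longlongrightarrow> 0) (at_right 0 \<times>\<^sub>F sequentially)"
    using tendsto_L2norm_sq_Ahat_eps_s assms(6) by blast
qed

end
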